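(* Let $A\in\mathbb{R}^{n\times n}$ be arbitrary. Then for almost every $T>0$ (that is, for all $T>0$ outside a set of Lebesgue measure zero), the finite-time controllability scoring problem (FTCSP) $$\text{minimize } h_T(p) \quad \text{subject to } p\in X_T\cap\Delta$$ admits a unique optimal solution, both in the case $h_T=f_T$ (the solution being called the VCS) and in the case $h_T=g_T$ (the solution being called the AECS).
   Context: For $T>0$ and $i=1,\dots,n$ let $e_i$ be the $i$-th standard basis vector of $\mathbb{R}^n$ and $W_i(T):=\int_0^T e^{At}e_ie_i^\top e^{A^\top t}\,dt$. For $p=(p_i)\in\mathbb{R}^n$ put $W(p,T):=\sum_{i=1}^n p_iW_i(T)$. Define $X_T:=\{p\in\mathbb{R}^n : W(p,T)\succ 0\}$ (positive definite) and the standard simplex $\Delta:=\{p\in\mathbb{R}^n:\sum_i p_i=1,\ p_i\ge 0\ \forall i\}$. On $X_T$ define $f_T(p):=-\log\det W(p,T)$ and $g_T(p):=\operatorname{tr}(W(p,T)^{-1})$. *)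

theory Defs
  imports "HOL-Analysis.Analysis"
begin

primrec mpow :: "real^'n^'n \<Rightarrow> nat \<Rightarrow> real^'n^'n" where
  "mpow M 0 = mat 1"
| "mpow M (Suc k) = M ** mpow M k"

definition mexp :: "real \<Rightarrow> real^'n^'n \<Rightarrow> real^'n^'n" where
  "mexp t A = (\<Sum>k. ((t ^ k) / fact k) *\<^sub>R mpow A k)"

definition ebasis :: "'n::finite \<Rightarrow> real^'n" where
  "ebasis i = axis i 1"

definition outer :: "real^'n \<Rightarrow> real^'n \<Rightarrow> real^'n^'n" where
  "outer u v = (\<chi> a b. u $ a * v $ b)"

definition Wi :: "real^'n^'n \<Rightarrow> 'n::finite \<Rightarrow> real \<Rightarrow> real^'n^'n" where
  "Wi A i T = integral {0..T}
     (\<lambda>t. mexp t A ** outer (ebasis i) (ebasis i) ** mexp t (transpose A))"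

definition Wp :: "real^'n^'n \<Rightarrow> real^'n \<Rightarrow> real \<Rightarrow> real^'n^'n" where
  "Wp A p T = (\<Sum>i\<in>UNIV. (p $ i) *\<^sub>R Wi A i T)"

definition pos_def :: "real^'n^'n \<Rightarrow> bool" where
  "pos_def M \<longleftrightarrow> transpose M = M \<and> (\<forall>x. x \<noteq> 0 \<longrightarrow> x \<bullet> (M *v x) > 0)"

definition XT :: "real^'n^'n \<Rightarrow> real \<Rightarrow> (real^'n) set" where
  "XT A T = {p. pos_def (Wp A p T)}"

definition std_simplex :: "(real^'n) set" where
  "std_simplex = {p. sum (\<lambda>i. p $ i) UNIV = 1 \<and> (\<forall>i. p $ i \<ge> 0)}"

definition fT :: "real^'n^'n \<Rightarrow> real \<Rightarrow> real^'n \<Rightarrow> real" where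
  "fT A T p = - ln (det (Wp A p T))"

definition gT :: "real^'n^'n \<Rightarrow> real \<Rightarrow> real^'n \<Rightarrow> real" where
  "gT A T p = trace (matrix_inv (Wp A p T))"

definition unique_minimizer :: "('a \<Rightarrow> real) \<Rightarrow> 'a set \<Rightarrow> bool" where
  "unique_minimizer h S \<longleftrightarrow> (\<exists>!p. p \<in> S \<and> (\<forall>q\<in>S. h p \<le> h q))"

end

theory Submission
  imports Defs "HOL-Complex_Analysis.Conformal_Mappings"
    "HOL-Computational_Algebra.Fundamental_Theorem_Algebra"
begin

text \<open>Let \<open>W\<^sub>1, ..., W\<^sub>n\<close> be positive semidefinite and linearly independent with positive definite
  sum. On the part of the simplex where \<open>W(p)\<close> is positive definite, \<open>-log det W(p)\<close> and
  \<open>tr W(p)\<inverse>\<close> are strictly midpoint convex, and both attain their infimum (for the trace since it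
  is a supremum of affine functions of \<open>p\<close> that blows up as \<open>W(p)\<close> becomes singular), so each has
  exactly one minimizer. Strict convexity of \<open>-log det\<close> is \<open>det W\<^sub>1 det W\<^sub>2 < det ((W\<^sub>1 + W\<^sub>2)/2)\<^sup>2\<close>,
  read off from \<open>t \<mapsto> det (W\<^sub>1 + t (W\<^sub>2 - W\<^sub>1))\<close>, a product of real linear factors whose roots all
  lie outside \<open>[0, 1]\<close>.

  The Gramians \<open>W\<^sub>i(T)\<close> meet these hypotheses whenever \<open>T > 0\<close> and the matrix of integrals
  \<open>\<integral>\<^sub>0\<^sup>T ((e\<^sup>A\<^sup>t)\<^sub>i\<^sub>j)\<^sup>2 dt\<close> is nonsingular. Its determinant extends to an entire function of \<open>T\<close>
  behaving like \<open>T\<^sup>n\<close> at \<open>0\<close>, so it vanishes only on a countable, hence null, set of horizons.\<close>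

section \<open>Quadratic forms and positive definite matrices\<close>

definition symmetric_matrix :: "'a^'n^'n \<Rightarrow> bool" where
  "symmetric_matrix M \<longleftrightarrow> (\<forall>i j. M$i$j = M$j$i)"

definition pos_semidef :: "real^'n^'n \<Rightarrow> bool" where
  "pos_semidef M \<longleftrightarrow> symmetric_matrix M \<and> (\<forall>x. x \<bullet> (M *v x) \<ge> 0)"

lemma pos_def_iff:
  "pos_def M \<longleftrightarrow> symmetric_matrix M \<and> (\<forall>x. x \<noteq> 0 \<longrightarrow> x \<bullet> (M *v x) > 0)"
  by (auto simp: pos_def_def symmetric_matrix_def transpose_def vec_eq_iff)

lemma pos_def_imp_pos_semidef: "pos_def M \<Longrightarrow> pos_semidef M"
  unfolding pos_def_iff pos_semidef_def
  by (metis inner_zero_left order.strict_implies_order order_refl)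

lemma inner_matrix_vector_sum:
  fixes M :: "real^'n^'n"
  shows "x \<bullet> (M *v y) = (\<Sum>i\<in>UNIV. \<Sum>j\<in>UNIV. x$i * M$i$j * y$j)"
  by (simp add: inner_vec_def matrix_vector_mult_def sum_distrib_left mult.assoc)

lemma inner_axis_matrix_axis:
  fixes M :: "real^'n^'n"
  shows "axis i 1 \<bullet> (M *v axis j 1) = M$i$j"
  by (simp add: inner_axis' matrix_vector_mult_basis column_def)

lemma symmetric_matrix_inner_commute:
  fixes M :: "real^'n^'n"
  shows "symmetric_matrix M \<Longrightarrow> x \<bullet> (M *v y) = y \<bullet> (M *v x)"
  unfolding inner_matrix_vector_sum symmetric_matrix_def
  by (subst sum.swap) (auto intro!: sum.cong simp: mult.commute mult.left_commute)

lemma inner_matrix_add: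
  fixes M N :: "real^'n^'n"
  shows "x \<bullet> ((M + N) *v y) = x \<bullet> (M *v y) + x \<bullet> (N *v y)"
  by (simp add: matrix_vector_mult_add_rdistrib inner_add_right)

lemma inner_matrix_scaleR:
  fixes M :: "real^'n^'n"
  shows "x \<bullet> ((c *\<^sub>R M) *v y) = c * (x \<bullet> (M *v y))"
  unfolding inner_matrix_vector_sum by (simp add: sum_distrib_left mult_ac)

lemma continuous_on_quadratic_form:
  fixes M :: "real^'n^'n"
  shows "continuous_on S (\<lambda>y. y \<bullet> (M *v y))"
  unfolding inner_matrix_vector_sum by (intro continuous_intros)

lemma symmetric_matrix_form_zero_imp_zero:
  fixes D :: "real^'n^'n"
  assumes D: "symmetric_matrix D" and zero: "\<And>y. y \<bullet> (D *v y) = 0"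
  shows "D = 0"
proof -
  have "x \<bullet> (D *v y) = 0" for x y
  proof -
    have "(x + y) \<bullet> (D *v (x + y)) = x \<bullet> (D *v x) + x \<bullet> (D *v y) + y \<bullet> (D *v x) + y \<bullet> (D *v y)"
      by (simp add: inner_add_left inner_add_right matrix_vector_right_distrib)
    then show ?thesis
      using zero[of "x + y"] zero[of x] zero[of y] symmetric_matrix_inner_commute[OF D, of x y] by simp
  qed
  then have "D$i$j = 0" for i j using inner_axis_matrix_axis[of i D j] by simp
  then show ?thesis by (simp add: vec_eq_iff)
qed

text \<open>Minimising the form along the line through \<open>x\<close> in the direction \<open>M x\<close> shows \<open>M x = 0\<close>.\<close>
lemma pos_semidef_form_zero_imp_kernel:
  assumes "pos_semidef M" "x \<bullet> (M *v x) = 0"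
  shows "M *v x = 0"
proof (rule ccontr)
  let ?y = "M *v x"
  assume ne: "?y \<noteq> 0"
  have sym: "symmetric_matrix M" and nonneg: "\<And>z. z \<bullet> (M *v z) \<ge> 0"
    using assms(1) by (auto simp: pos_semidef_def)
  define a where "a = ?y \<bullet> ?y"
  define c where "c = ?y \<bullet> (M *v ?y)"
  have a: "a > 0" using ne by (simp add: a_def)
  have expand: "(x + t *\<^sub>R ?y) \<bullet> (M *v (x + t *\<^sub>R ?y)) = 2 * t * a + t * t * c" for t
  proof -
    have "?y \<bullet> (M *v x) = a" "x \<bullet> (M *v ?y) = a"
      using symmetric_matrix_inner_commute[OF sym, of x ?y] by (simp_all add: a_def)
    then show ?thesis
      using assms(2)
      by (simp add: inner_add_left inner_add_right matrix_vector_right_distrib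
          matrix_vector_mult_scaleR c_def algebra_simps)
  qed
  define s where "s = a / (\<bar>c\<bar> + 1)"
  have s: "s > 0" using a by (simp add: s_def)
  have "0 \<le> 2 * (-s) * a + (-s) * (-s) * c" using nonneg expand by metis
  then have "s * (2 * a) \<le> s * (s * c)" by (simp add: algebra_simps)
  then have "2 * a \<le> s * c" using s by simp
  moreover have "s * c \<le> a"
  proof -
    have "s * c \<le> s * \<bar>c\<bar>" using s by (simp add: mult_left_mono)
    also have "\<dots> = a * (\<bar>c\<bar> / (\<bar>c\<bar> + 1))" by (simp add: s_def)
    also have "\<dots> \<le> a * 1" using a by (intro mult_left_mono) auto
    finally show ?thesis by simp
  qed
  ultimately show False using a by linarith
qed

lemma det_eq_0_iff_kernel:
  fixes M :: "'a::field^'n^'n"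
  shows "det M = 0 \<longleftrightarrow> (\<exists>x. x \<noteq> 0 \<and> M *v x = 0)"
proof -
  have "det M = 0 \<longleftrightarrow> \<not> inj ((*v) M)"
    using det_nz_iff_inj_gen[OF matrix_vector_mul_linear_gen[of M]]
    by (auto simp: matrix_of_matrix_vector_mul)
  also have "\<dots> \<longleftrightarrow> (\<exists>x. x \<noteq> 0 \<and> M *v x = 0)"
  proof
    assume "\<not> inj ((*v) M)"
    then obtain u v where "u \<noteq> v" "M *v u = M *v v" by (auto simp: inj_def)
    then show "\<exists>x. x \<noteq> 0 \<and> M *v x = 0"
      by (intro exI[of _ "u - v"]) (simp add: matrix_vector_mult_diff_distrib)
  next
    assume "\<exists>x. x \<noteq> 0 \<and> M *v x = 0"
    then show "\<not> inj ((*v) M)" by (metis injD matrix_vector_mult_0_right)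
  qed
  finally show ?thesis .
qed

lemma pos_def_det_nonzero: "pos_def M \<Longrightarrow> det M \<noteq> 0"
  by (auto simp: det_eq_0_iff_kernel pos_def_iff)

lemma pos_semidef_det_nonzero_imp_pos_def:
  assumes "pos_semidef M" "det M \<noteq> 0"
  shows "pos_def M"
proof -
  have "x \<bullet> (M *v x) > 0" if "x \<noteq> 0" for x
  proof (rule ccontr)
    assume "\<not> x \<bullet> (M *v x) > 0"
    then have "x \<bullet> (M *v x) = 0" using assms(1) by (simp add: pos_semidef_def) (meson antisym not_less)
    then have "M *v x = 0" using pos_semidef_form_zero_imp_kernel assms(1) by blast
    then show False using that assms(2) by (auto simp: det_eq_0_iff_kernel)
  qed
  then show ?thesis using assms(1) by (simp add: pos_def_iff pos_semidef_def)
qed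

lemma pos_def_mat_1: "pos_def (mat 1 :: real^'n^'n)"
  unfolding pos_def_def by simp

lemma pos_def_convex_comb:
  fixes A B :: "real^'n^'n"
  assumes "pos_def A" "pos_def B" "0 \<le> t" "t \<le> 1"
  shows "pos_def ((1 - t) *\<^sub>R A + t *\<^sub>R B)"
proof -
  have "symmetric_matrix ((1 - t) *\<^sub>R A + t *\<^sub>R B)"
    using assms by (simp add: symmetric_matrix_def pos_def_iff)
  moreover have "x \<bullet> (((1 - t) *\<^sub>R A + t *\<^sub>R B) *v x) > 0" if "x \<noteq> 0" for x
  proof -
    have "x \<bullet> (A *v x) > 0" "x \<bullet> (B *v x) > 0"
      using assms that by (auto simp: pos_def_iff)
    moreover have "x \<bullet> (((1 - t) *\<^sub>R A + t *\<^sub>R B) *v x)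
                   = (1 - t) * (x \<bullet> (A *v x)) + t * (x \<bullet> (B *v x))"
      by (simp add: inner_matrix_add inner_matrix_scaleR)
    ultimately show ?thesis
      using assms(3,4) by (cases "t = 1") (auto intro: add_pos_nonneg)
  qed
  ultimately show ?thesis by (simp add: pos_def_iff)
qed

lemma pos_def_midpoint:
  fixes A B :: "real^'n^'n"
  assumes "pos_def A" "pos_def B"
  shows "pos_def (midpoint A B)"
proof -
  have "midpoint A B = (1 - 1/2) *\<^sub>R A + (1/2) *\<^sub>R B"
    by (simp add: midpoint_def scaleR_add_right)
  then show ?thesis using pos_def_convex_comb[OF assms, of "1/2"] by simp
qed

lemma continuous_on_det_pencil:
  fixes A B :: "real^'n^'n"
  shows "continuous_on S (\<lambda>t. det (A + t *\<^sub>R B))"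
  unfolding det_def by simp (intro continuous_intros)

text \<open>The determinant cannot change sign along the segment from \<open>I\<close> to \<open>M\<close>, which stays
  positive definite.\<close>
lemma pos_def_det_pos:
  fixes M :: "real^'n^'n"
  assumes "pos_def M"
  shows "det M > 0"
proof (rule ccontr)
  assume "\<not> det M > 0"
  let ?f = "\<lambda>t. det (mat 1 + t *\<^sub>R (M - mat 1))"
  have "?f 1 \<le> 0" "0 \<le> ?f 0" using \<open>\<not> det M > 0\<close> by simp_all
  then obtain t where t: "0 \<le> t" "t \<le> 1" "?f t = 0"
    using IVT2'[of ?f 1 0 0, OF _ _ _ continuous_on_det_pencil] by auto
  have "mat 1 + t *\<^sub>R (M - mat 1) = (1 - t) *\<^sub>R mat 1 + t *\<^sub>R M"
    by (simp add: algebra_simps)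
  then have "pos_def (mat 1 + t *\<^sub>R (M - mat 1))"
    using pos_def_convex_comb[OF pos_def_mat_1 assms t(1,2)] by simp
  then show False using pos_def_det_nonzero t(3) by blast
qed

section \<open>The determinant along a pencil of symmetric matrices\<close>

definition of_real_matrix :: "real^'n^'n \<Rightarrow> complex^'n^'n" where
  "of_real_matrix M = (\<chi> i j. of_real (M$i$j))"

lemma det_of_real_matrix: "det (of_real_matrix M) = of_real (det M)"
  unfolding det_def of_real_matrix_def by simp

definition det_pencil_poly :: "'a::comm_ring_1^'n^'n \<Rightarrow> 'a^'n^'n \<Rightarrow> 'a poly" where
  "det_pencil_poly A B =
     (\<Sum>p | p permutes (UNIV::'n set). of_int (sign p) * (\<Prod>i\<in>UNIV. [:A$i$p i, B$i$p i:]))"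

lemma poly_det_pencil_poly: "poly (det_pencil_poly A B) z = det (\<chi> i j. A$i$j + z * B$i$j)"
  unfolding det_pencil_poly_def det_def by (simp add: poly_sum poly_prod poly_of_int)

lemma poly_det_pencil_poly_of_real:
  fixes W D :: "real^'n^'n"
  shows "poly (det_pencil_poly (of_real_matrix W) (of_real_matrix D)) (of_real t)
           = of_real (det (W + t *\<^sub>R D))"
proof -
  have "(\<chi> i j. of_real_matrix W$i$j + of_real t * of_real_matrix D$i$j) = of_real_matrix (W + t *\<^sub>R D)"
    by (simp add: of_real_matrix_def vec_eq_iff)
  then show ?thesis by (simp add: poly_det_pencil_poly det_of_real_matrix)
qed

lemma hermitian_form_of_real_matrix:
  fixes M :: "real^'n^'n" and x :: "complex^'n"
  assumes "symmetric_matrix M"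
  defines "u \<equiv> (\<chi> i. Re (x$i))" and "v \<equiv> (\<chi> i. Im (x$i))"
  shows "(\<Sum>i\<in>UNIV. \<Sum>j\<in>UNIV. cnj (x$i) * of_real (M$i$j) * x$j)
          = of_real (u \<bullet> (M *v u) + v \<bullet> (M *v v))"
proof (rule complex_eqI)
  show "Re (\<Sum>i\<in>UNIV. \<Sum>j\<in>UNIV. cnj (x$i) * of_real (M$i$j) * x$j)
        = Re (of_real (u \<bullet> (M *v u) + v \<bullet> (M *v v)))"
    unfolding inner_matrix_vector_sum u_def v_def by (simp add: sum.distrib[symmetric] algebra_simps)
  have "(\<Sum>i\<in>UNIV. \<Sum>j\<in>UNIV. M$i$j * (Re (x$i) * Im (x$j))) = u \<bullet> (M *v v)"
    "(\<Sum>i\<in>UNIV. \<Sum>j\<in>UNIV. M$i$j * (Im (x$i) * Re (x$j))) = v \<bullet> (M *v u)"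
    unfolding inner_matrix_vector_sum u_def v_def by (simp_all add: algebra_simps)
  moreover have "u \<bullet> (M *v v) = v \<bullet> (M *v u)"
    using symmetric_matrix_inner_commute[OF assms(1)] by blast
  ultimately have "(\<Sum>i\<in>UNIV. \<Sum>j\<in>UNIV. M$i$j * (Re (x$i) * Im (x$j)) - M$i$j * (Im (x$i) * Re (x$j))) = 0"
    by (simp add: sum_subtractf)
  then show "Im (\<Sum>i\<in>UNIV. \<Sum>j\<in>UNIV. cnj (x$i) * of_real (M$i$j) * x$j)
             = Im (of_real (u \<bullet> (M *v u) + v \<bullet> (M *v v)))"
    by (simp add: algebra_simps)
qed

text \<open>A complex root \<open>z\<close> gives a null vector \<open>x\<close> of \<open>W + z D\<close>; pairing with \<open>x\<^sup>*\<close> yields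
  \<open>a + z b = 0\<close> with real \<open>a > 0\<close> and \<open>b\<close>.\<close>
lemma det_pencil_poly_root_real:
  fixes W D :: "real^'n^'n"
  assumes W: "pos_def W" and D: "symmetric_matrix D"
    and root: "poly (det_pencil_poly (of_real_matrix W) (of_real_matrix D)) z = 0"
  shows "Im z = 0"
proof -
  let ?M = "\<chi> i j. of_real_matrix W$i$j + z * of_real_matrix D$i$j"
  have "det ?M = 0" using root by (simp add: poly_det_pencil_poly)
  then obtain x where x: "x \<noteq> 0" and Mx: "?M *v x = 0" by (auto simp: det_eq_0_iff_kernel)
  define u where "u = (\<chi> i. Re (x$i))"
  define v where "v = (\<chi> i. Im (x$i))"
  define a where "a = u \<bullet> (W *v u) + v \<bullet> (W *v v)"
  define b where "b = u \<bullet> (D *v u) + v \<bullet> (D *v v)"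
  have uv: "u \<noteq> 0 \<or> v \<noteq> 0"
    using x by (auto simp: u_def v_def vec_eq_iff complex_eq_iff)
  have nonneg: "u \<bullet> (W *v u) \<ge> 0" "v \<bullet> (W *v v) \<ge> 0"
    using pos_def_imp_pos_semidef[OF W] by (auto simp: pos_semidef_def)
  have a: "a > 0"
  proof (cases "u = 0")
    case True
    then show ?thesis using uv W nonneg by (simp add: a_def pos_def_iff)
  next
    case False
    then show ?thesis using W nonneg by (simp add: a_def pos_def_iff add_pos_nonneg)
  qed
  have "0 = (\<Sum>i\<in>UNIV. cnj (x$i) * (?M *v x)$i)" using Mx by simp
  also have "\<dots> = (\<Sum>i\<in>UNIV. \<Sum>j\<in>UNIV. cnj (x$i) * of_real (W$i$j) * x$j)
                 + z * (\<Sum>i\<in>UNIV. \<Sum>j\<in>UNIV. cnj (x$i) * of_real (D$i$j) * x$j)"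
    by (simp add: matrix_vector_mult_def of_real_matrix_def sum_distrib_left
        sum.distrib[symmetric] algebra_simps)
  also have "\<dots> = of_real a + z * of_real b"
    unfolding a_def b_def u_def v_def
    using hermitian_form_of_real_matrix[OF D] hermitian_form_of_real_matrix[of W] W
    by (simp add: pos_def_iff)
  finally have "Re z * b = - a" "Im z * b = 0" by (simp_all add: complex_eq_iff)
  then show ?thesis using a by auto
qed

lemma det_pencil_real_factorization:
  fixes W D :: "real^'n^'n"
  assumes W: "pos_def W" and D: "symmetric_matrix D"
  obtains c m \<rho> where "\<And>t. det (W + t *\<^sub>R D) = c * (\<Prod>i<(m::nat). t - \<rho> i)"
proof -
  let ?P = "det_pencil_poly (of_real_matrix W) (of_real_matrix D)"
  obtain root where decomp: "smult (lead_coeff ?P) (\<Prod>i<degree ?P. [:-root i, 1:]) = ?P"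
    using complex_poly_decompose' by blast
  define m where "m = degree ?P"
  define lc where "lc = lead_coeff ?P"
  have poly_P: "poly ?P w = lc * (\<Prod>i<m. w - root i)" for w
    by (subst decomp[symmetric]) (simp add: poly_prod m_def lc_def)
  define \<rho> where "\<rho> i = Re (root i)" for i
  have root_real: "root i = of_real (\<rho> i)" if "i < m" for i
  proof -
    have "(\<Prod>j<m. root i - root j) = 0" using that by (intro prod_zero) auto
    then have "Im (root i) = 0"
      using det_pencil_poly_root_real[OF W D] poly_P[of "root i"] by simp
    then show ?thesis by (simp add: \<rho>_def complex_eq_iff)
  qed
  have fac: "of_real (det (W + t *\<^sub>R D)) = lc * of_real (\<Prod>i<m. t - \<rho> i)" for t
  proof -
    have "of_real (det (W + t *\<^sub>R D)) = poly ?P (of_real t)"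
      by (simp add: poly_det_pencil_poly_of_real)
    also have "\<dots> = lc * (\<Prod>i<m. of_real t - root i)" by (rule poly_P)
    also have "(\<Prod>i<m. of_real t - root i) = (\<Prod>i<m. of_real (t - \<rho> i))"
      by (intro prod.cong) (auto simp: root_real)
    finally show ?thesis by simp
  qed
  define a where "a = (\<Prod>i<m. (0::real) - \<rho> i)"
  have "of_real (det W) = lc * of_real a" using fac[of 0] by (simp add: a_def)
  moreover have "det W \<noteq> 0" using pos_def_det_nonzero[OF W] .
  ultimately have "a \<noteq> 0" "lc = of_real (det W / a)" by (auto simp: field_simps)
  then have "complex_of_real (det (W + t *\<^sub>R D)) = of_real (det W / a * (\<Prod>i<m. t - \<rho> i))" for t
    using fac[of t] by simp
  then have "det (W + t *\<^sub>R D) = det W / a * (\<Prod>i<m. t - \<rho> i)" for t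
    using of_real_eq_iff by blast
  then show ?thesis using that by blast
qed

lemma rayleigh_quotient_max:
  fixes W D :: "real^'n^'n"
  assumes W: "pos_def W" and D: "symmetric_matrix D"
  obtains l x where "x \<noteq> 0" "D *v x = l *\<^sub>R (W *v x)" "\<And>y. y \<bullet> (D *v y) \<le> l * (y \<bullet> (W *v y))"
proof -
  let ?S = "sphere (0::real^'n) 1"
  let ?R = "\<lambda>y. (y \<bullet> (D *v y)) / (y \<bullet> (W *v y))"
  have W_pos: "\<And>y. y \<noteq> 0 \<Longrightarrow> y \<bullet> (W *v y) > 0" using W by (auto simp: pos_def_iff)
  have "axis undefined 1 \<in> ?S" by simp
  then have ne: "?S \<noteq> {}" by blast
  have "y \<bullet> (W *v y) \<noteq> 0" if "y \<in> ?S" for y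
    using that W_pos[of y] by fastforce
  then have "continuous_on ?S ?R"
    by (intro continuous_intros continuous_on_quadratic_form) auto
  then obtain x where x: "x \<in> ?S" and x_max: "\<And>y. y \<in> ?S \<Longrightarrow> ?R y \<le> ?R x"
    using continuous_attains_sup[OF compact_sphere ne] by blast
  define l where "l = ?R x"
  have x0: "x \<noteq> 0" using x by auto
  have le: "y \<bullet> (D *v y) \<le> l * (y \<bullet> (W *v y))" for y
  proof (cases "y = 0")
    case False
    define c where "c = inverse (norm y)"
    have "c *\<^sub>R y \<in> ?S" using False by (simp add: c_def)
    moreover have "?R (c *\<^sub>R y) = ?R y"
      using False by (simp add: c_def matrix_vector_mult_scaleR)
    ultimately have "?R y \<le> l" using x_max[of "c *\<^sub>R y"] by (simp add: l_def)
    then show ?thesis using W_pos[OF False] by (simp add: divide_le_eq)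
  qed simp
  let ?N = "l *\<^sub>R W - D"
  have "pos_semidef ?N"
    using W D le by (simp add: pos_semidef_def symmetric_matrix_def pos_def_iff
        matrix_vector_mult_diff_rdistrib inner_diff_right inner_matrix_scaleR)
  moreover have "x \<bullet> (?N *v x) = 0"
    using W_pos[OF x0] by (simp add: matrix_vector_mult_diff_rdistrib inner_diff_right
        inner_matrix_scaleR l_def)
  ultimately have "?N *v x = 0" by (rule pos_semidef_form_zero_imp_kernel)
  then have "D *v x = l *\<^sub>R (W *v x)"
    by (simp add: matrix_vector_mult_diff_rdistrib scaleR_matrix_vector_assoc)
  then show ?thesis using that x0 le by blast
qed

lemma det_pencil_root_if_form_pos:
  fixes W D :: "real^'n^'n"
  assumes W: "pos_def W" and D: "symmetric_matrix D" and y: "y \<bullet> (D *v y) > 0"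
  obtains t where "det (W + t *\<^sub>R D) = 0"
proof -
  obtain l x where x: "x \<noteq> 0" and Dx: "D *v x = l *\<^sub>R (W *v x)"
      and le: "\<And>y. y \<bullet> (D *v y) \<le> l * (y \<bullet> (W *v y))"
    using rayleigh_quotient_max[OF W D] by blast
  have "l \<noteq> 0" using le[of y] y by auto
  have "(W + (- 1 / l) *\<^sub>R D) *v x = W *v x + (- 1 / l) *\<^sub>R (D *v x)"
    by (simp only: matrix_vector_mult_add_rdistrib scaleR_matrix_vector_assoc)
  also have "\<dots> = 0" using \<open>l \<noteq> 0\<close> Dx by simp
  finally show ?thesis using that[of "- 1 / l"] x unfolding det_eq_0_iff_kernel by blast
qed

lemma det_pencil_has_root:
  fixes W D :: "real^'n^'n"
  assumes W: "pos_def W" and D: "symmetric_matrix D" "D \<noteq> 0"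
  obtains t where "det (W + t *\<^sub>R D) = 0"
proof -
  obtain y where "y \<bullet> (D *v y) \<noteq> 0"
    using symmetric_matrix_form_zero_imp_zero D by blast
  moreover have "(- D) *v y = - (D *v y)"
    by (simp add: matrix_vector_mult_def vec_eq_iff sum_negf)
  ultimately consider "y \<bullet> (D *v y) > 0" | "y \<bullet> ((- D) *v y) > 0"
    by fastforce
  then show ?thesis
  proof cases
    case 1
    then show ?thesis using det_pencil_root_if_form_pos[OF W D(1)] that by blast
  next
    case 2
    moreover have "symmetric_matrix (- D)" using D by (simp add: symmetric_matrix_def)
    ultimately obtain t where "det (W + t *\<^sub>R (- D)) = 0"
      using det_pencil_root_if_form_pos[OF W] by blast
    then show ?thesis using that[of "- t"] by simp
  qed
qed

lemma prod_factors_midpoint_gt: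
  fixes \<rho> :: "nat \<Rightarrow> real"
  assumes c: "c \<noteq> 0" and m: "m > 0" and outside: "\<And>i. i < m \<Longrightarrow> \<rho> i < 0 \<or> \<rho> i > 1"
  shows "(c * (\<Prod>i<m. 0 - \<rho> i)) * (c * (\<Prod>i<m. 1 - \<rho> i)) < (c * (\<Prod>i<m. 1/2 - \<rho> i))\<^sup>2"
proof -
  define f where "f i = (0 - \<rho> i) * (1 - \<rho> i)" for i
  define g where "g i = (1/2 - \<rho> i) * (1/2 - \<rho> i)" for i
  have f_pos: "f i > 0" if "i < m" for i
    using outside[OF that] unfolding f_def by (auto simp: mult_neg_pos mult_pos_neg)
  have g_eq: "g i = f i + 1/4" for i by (simp add: f_def g_def algebra_simps)
  have "(\<Prod>i<m. f i) < (\<Prod>i<m. g i)"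
  proof (rule prod_mono_strict[of 0])
    fix i assume "i \<in> {..<m}"
    then show "0 \<le> f i \<and> f i \<le> g i" "0 < g i"
      using f_pos[of i] g_eq[of i] by auto
  qed (use m g_eq in auto)
  moreover have "c * c > 0" using c by (metis not_real_square_gt_zero)
  ultimately have "c * c * (\<Prod>i<m. f i) < c * c * (\<Prod>i<m. g i)" by (rule mult_strict_left_mono)
  then show ?thesis
    unfolding f_def g_def prod.distrib power2_eq_square by (simp only: mult_ac)
qed

text \<open>All roots of \<open>t \<mapsto> det (W\<^sub>1 + t (W\<^sub>2 - W\<^sub>1))\<close> are real and lie outside \<open>[0, 1]\<close>, and there
  is at least one.\<close>
lemma det_midpoint_gt:
  fixes W1 W2 :: "real^'n^'n"
  assumes W1: "pos_def W1" and W2: "pos_def W2" and ne: "W1 \<noteq> W2"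
  shows "det W1 * det W2 < (det (midpoint W1 W2))\<^sup>2"
proof -
  define D where "D = W2 - W1"
  have D: "symmetric_matrix D" "D \<noteq> 0"
    using W1 W2 ne by (auto simp: D_def symmetric_matrix_def pos_def_iff)
  define \<phi> where "\<phi> t = det (W1 + t *\<^sub>R D)" for t
  obtain c m \<rho> where fac: "\<And>t. \<phi> t = c * (\<Prod>i<(m::nat). t - \<rho> i)"
    using det_pencil_real_factorization[OF W1 D(1)] unfolding \<phi>_def by blast
  have nonzero: "\<phi> t \<noteq> 0" if "0 \<le> t" "t \<le> 1" for t
  proof -
    have "W1 + t *\<^sub>R D = (1 - t) *\<^sub>R W1 + t *\<^sub>R W2" by (simp add: D_def algebra_simps)
    then show ?thesis
      unfolding \<phi>_def using pos_def_det_nonzero[OF pos_def_convex_comb[OF W1 W2 that]] by simp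
  qed
  have c: "c \<noteq> 0" using nonzero[of 0] fac[of 0] by auto
  have "\<rho> i < 0 \<or> \<rho> i > 1" if "i < m" for i
  proof (rule ccontr)
    assume "\<not> (\<rho> i < 0 \<or> \<rho> i > 1)"
    moreover have "(\<Prod>j<m. \<rho> i - \<rho> j) = 0" using that by (intro prod_zero) auto
    ultimately show False using nonzero[of "\<rho> i"] fac[of "\<rho> i"] by simp
  qed
  moreover have "m > 0"
  proof (rule ccontr)
    assume "\<not> m > 0"
    moreover obtain t where "\<phi> t = 0"
      using det_pencil_has_root[OF W1 D] unfolding \<phi>_def by blast
    ultimately show False using c fac[of t] by simp
  qed
  ultimately have "\<phi> 0 * \<phi> 1 < (\<phi> (1/2))\<^sup>2"
    unfolding fac using prod_factors_midpoint_gt[OF c] by blast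
  moreover have "W1 + (1/2) *\<^sub>R D = midpoint W1 W2"
    by (simp add: D_def midpoint_def vec_eq_iff field_simps)
  ultimately show ?thesis by (simp add: \<phi>_def D_def)
qed

lemma neg_ln_det_midpoint_less:
  fixes W1 W2 :: "real^'n^'n"
  assumes W1: "pos_def W1" and W2: "pos_def W2" and ne: "W1 \<noteq> W2"
  shows "- ln (det (midpoint W1 W2)) < (- ln (det W1) + - ln (det W2)) / 2"
proof -
  have pos: "det W1 > 0" "det W2 > 0" "det (midpoint W1 W2) > 0"
    using W1 W2 pos_def_midpoint[OF W1 W2] by (auto intro: pos_def_det_pos)
  then have "ln (det W1 * det W2) < ln ((det (midpoint W1 W2))\<^sup>2)"
    using det_midpoint_gt[OF assms] by simp
  then show ?thesis using pos by (simp add: ln_mult ln_realpow)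
qed

section \<open>The trace of the inverse as a supremum of affine functions\<close>

lemma invertible_matrix_inv:
  fixes M :: "real^'n^'n"
  assumes "invertible M"
  shows "M ** matrix_inv M = mat 1" "matrix_inv M ** M = mat 1"
proof -
  have "\<exists>M'. M ** M' = mat 1 \<and> M' ** M = mat 1" using assms by (simp add: invertible_def)
  then have "M ** matrix_inv M = mat 1 \<and> matrix_inv M ** M = mat 1"
    unfolding matrix_inv_def by (rule someI_ex)
  then show "M ** matrix_inv M = mat 1" "matrix_inv M ** M = mat 1" by auto
qed

lemma pos_def_invertible: "pos_def M \<Longrightarrow> invertible M"
  using pos_def_det_nonzero invertible_det_nz by blast

text \<open>Completing the square: the gap is \<open>(y - W\<inverse> x) \<bullet> W (y - W\<inverse> x)\<close>.\<close>
lemma inverse_form_ge: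
  fixes W :: "real^'n^'n"
  assumes W: "pos_def W"
  shows "2 * (x \<bullet> y) - y \<bullet> (W *v y) \<le> x \<bullet> (matrix_inv W *v x)"
    and "2 * (x \<bullet> y) - y \<bullet> (W *v y) = x \<bullet> (matrix_inv W *v x) \<Longrightarrow> W *v y = x"
proof -
  define z where "z = matrix_inv W *v x"
  have Wz: "W *v z = x"
    using invertible_matrix_inv[OF pos_def_invertible[OF W]] by (simp add: z_def matrix_vector_mul_assoc)
  have sym: "symmetric_matrix W" using W by (simp add: pos_def_iff)
  have gap: "x \<bullet> (matrix_inv W *v x) - (2 * (x \<bullet> y) - y \<bullet> (W *v y)) = (y - z) \<bullet> (W *v (y - z))"
  proof -
    have "z \<bullet> (W *v y) = y \<bullet> (W *v z)" using symmetric_matrix_inner_commute[OF sym] by blast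
    then show ?thesis
      using Wz by (simp add: z_def[symmetric] matrix_vector_mult_diff_distrib inner_diff_left
          inner_diff_right inner_commute)
  qed
  have "(y - z) \<bullet> (W *v (y - z)) \<ge> 0"
    using pos_def_imp_pos_semidef[OF W] by (simp add: pos_semidef_def)
  then show "2 * (x \<bullet> y) - y \<bullet> (W *v y) \<le> x \<bullet> (matrix_inv W *v x)" using gap by simp
  assume "2 * (x \<bullet> y) - y \<bullet> (W *v y) = x \<bullet> (matrix_inv W *v x)"
  then have "(y - z) \<bullet> (W *v (y - z)) = 0" using gap by simp
  then have "y - z = 0" using W unfolding pos_def_iff by (metis less_irrefl)
  then show "W *v y = x" using Wz by simp
qed

text \<open>Applying \<open>inverse_form_ge\<close> to each column of the identity, \<open>tr M\<inverse>\<close> is the maximum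
  over \<open>Y\<close> of this expression, which is affine in \<open>M\<close>.\<close>
definition trace_inv_minorant :: "real^'n^'n \<Rightarrow> ('n \<Rightarrow> real^'n) \<Rightarrow> real" where
  "trace_inv_minorant M Y = (\<Sum>j\<in>UNIV. 2 * (Y j $ j) - Y j \<bullet> (M *v Y j))"

lemma trace_eq_sum_axis_forms:
  fixes M :: "real^'n^'n"
  shows "trace M = (\<Sum>j\<in>UNIV. axis j 1 \<bullet> (M *v axis j 1))"
  by (simp add: trace_def inner_axis_matrix_axis)

lemma trace_inv_minorant_term_le:
  assumes "pos_def W"
  shows "2 * y $ k - y \<bullet> (W *v y) \<le> axis k 1 \<bullet> (matrix_inv W *v axis k 1)"
  using inverse_form_ge(1)[OF assms, of "axis k 1" y] by (simp add: inner_axis')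

lemma trace_inv_minorant_le:
  assumes "pos_def W"
  shows "trace_inv_minorant W Y \<le> trace (matrix_inv W)"
  unfolding trace_inv_minorant_def trace_eq_sum_axis_forms
  using trace_inv_minorant_term_le[OF assms] by (rule sum_mono)

lemma trace_inv_minorant_less:
  assumes W: "pos_def W" and j: "W *v Y j \<noteq> axis j 1"
  shows "trace_inv_minorant W Y < trace (matrix_inv W)"
  unfolding trace_inv_minorant_def trace_eq_sum_axis_forms
proof (rule sum_strict_mono_ex1)
  have "2 * Y j $ j - Y j \<bullet> (W *v Y j) \<noteq> axis j 1 \<bullet> (matrix_inv W *v axis j 1)"
    using inverse_form_ge(2)[OF W, of "axis j 1" "Y j"] j by (auto simp: inner_axis')
  then have "2 * Y j $ j - Y j \<bullet> (W *v Y j) < axis j 1 \<bullet> (matrix_inv W *v axis j 1)"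
    using trace_inv_minorant_term_le[OF W, of "Y j" j] by linarith
  then show "\<exists>k\<in>UNIV. 2 * Y k $ k - Y k \<bullet> (W *v Y k) < axis k 1 \<bullet> (matrix_inv W *v axis k 1)"
    by blast
qed (use trace_inv_minorant_term_le[OF W] in auto)

lemma trace_inv_minorant_matrix_inv:
  assumes W: "pos_def W"
  shows "trace_inv_minorant W (\<lambda>j. matrix_inv W *v axis j 1) = trace (matrix_inv W)"
proof -
  have "W ** matrix_inv W = mat 1"
    using invertible_matrix_inv[OF pos_def_invertible[OF W]] by auto
  then have "W *v (matrix_inv W *v axis j 1) = axis j 1" for j
    by (simp add: matrix_vector_mul_assoc)
  then show ?thesis
    unfolding trace_inv_minorant_def trace_eq_sum_axis_forms by (simp add: inner_axis' inner_commute)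
qed

lemma trace_inv_minorant_midpoint:
  "trace_inv_minorant (midpoint A B) Y = (trace_inv_minorant A Y + trace_inv_minorant B Y) / 2"
  unfolding trace_inv_minorant_def midpoint_def
  by (simp add: inner_matrix_add inner_matrix_scaleR sum.distrib sum_subtractf
      sum_divide_distrib[symmetric] algebra_simps)

lemma eq_if_mult_matrix_inv_columns:
  fixes W M :: "real^'n^'n"
  assumes W: "pos_def W" and columns: "\<And>j. M *v (matrix_inv W *v axis j 1) = axis j 1"
  shows "M = W"
proof -
  have "column j (M ** matrix_inv W) = column j (mat 1)" for j
    using columns[of j] by (simp add: matrix_vector_mult_basis[symmetric] matrix_vector_mul_assoc)
  then have "M ** matrix_inv W = mat 1" by (simp add: column_def vec_eq_iff)
  then have "M = M ** (matrix_inv W ** W)"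
    using invertible_matrix_inv[OF pos_def_invertible[OF W]] by simp
  also have "\<dots> = W" by (simp add: matrix_mul_assoc \<open>M ** matrix_inv W = mat 1\<close>)
  finally show ?thesis .
qed

lemma trace_inv_midpoint_less:
  fixes W1 W2 :: "real^'n^'n"
  assumes W1: "pos_def W1" and W2: "pos_def W2" and ne: "W1 \<noteq> W2"
  shows "trace (matrix_inv (midpoint W1 W2)) < (trace (matrix_inv W1) + trace (matrix_inv W2)) / 2"
proof -
  let ?m = "midpoint W1 W2"
  define Y where "Y j = matrix_inv ?m *v axis j 1" for j
  have m: "pos_def ?m" using pos_def_midpoint[OF W1 W2] .
  have "W1 \<noteq> ?m \<or> W2 \<noteq> ?m" using ne by auto
  then have "\<exists>j. W1 *v Y j \<noteq> axis j 1 \<or> W2 *v Y j \<noteq> axis j 1"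
    using eq_if_mult_matrix_inv_columns[OF m] unfolding Y_def by blast
  then have "trace_inv_minorant W1 Y < trace (matrix_inv W1)
             \<or> trace_inv_minorant W2 Y < trace (matrix_inv W2)"
    using trace_inv_minorant_less[OF W1] trace_inv_minorant_less[OF W2] by blast
  then have "trace_inv_minorant W1 Y + trace_inv_minorant W2 Y < trace (matrix_inv W1) + trace (matrix_inv W2)"
    using trace_inv_minorant_le[OF W1, of Y] trace_inv_minorant_le[OF W2, of Y] by auto
  moreover have "trace (matrix_inv ?m) = (trace_inv_minorant W1 Y + trace_inv_minorant W2 Y) / 2"
    unfolding Y_def using trace_inv_minorant_matrix_inv[OF m] by (simp add: trace_inv_minorant_midpoint)
  ultimately show ?thesis by (simp add: field_simps)
qed

section \<open>Unique minimizers over the simplex\<close>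

lemma unique_minimizer_midpoint_convex:
  fixes h :: "'a::real_vector \<Rightarrow> real"
  assumes p: "p \<in> S" "\<forall>q\<in>S. h p \<le> h q"
    and convex: "\<And>p q. p \<in> S \<Longrightarrow> q \<in> S \<Longrightarrow> p \<noteq> q \<Longrightarrow>
                   midpoint p q \<in> S \<and> h (midpoint p q) < (h p + h q) / 2"
  shows "unique_minimizer h S"
  unfolding unique_minimizer_def
proof (rule ex1I)
  show "p \<in> S \<and> (\<forall>q\<in>S. h p \<le> h q)" using p by blast
next
  fix p' assume p': "p' \<in> S \<and> (\<forall>q\<in>S. h p' \<le> h q)"
  show "p' = p"
  proof (rule ccontr)
    assume "p' \<noteq> p"
    then have "midpoint p' p \<in> S" "h (midpoint p' p) < (h p' + h p) / 2"
      using convex p' p(1) by blast+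
    moreover have "h p' = h p" using p' p by (meson order_antisym)
    ultimately show False using p(2) by fastforce
  qed
qed

lemma compact_attains_inf_of_sup:
  fixes F :: "'b \<Rightarrow> 'a::t2_space \<Rightarrow> real"
  assumes K: "compact K" "K \<noteq> {}" and cont: "\<And>Y. continuous_on K (F Y)"
    and le: "\<And>Y p. p \<in> K \<Longrightarrow> F Y p \<le> g p" and attained: "\<And>p. p \<in> K \<Longrightarrow> \<exists>Y. F Y p = g p"
  obtains p where "p \<in> K" "\<And>q. q \<in> K \<Longrightarrow> g p \<le> g q"
proof -
  define C where "C q = (\<Inter>Y. {p \<in> K. F Y p \<le> g q})" for q
  have closed: "closed (C q)" for q
    unfolding C_def using compact_imp_closed[OF K(1)]
    by (intro closed_INT ballI continuous_on_closed_Collect_le cont continuous_on_const)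
  have fip: "K \<inter> \<Inter>(C ` Q) \<noteq> {}" if "finite Q" "Q \<subseteq> K" for Q
  proof (cases "Q = {}")
    case False
    have "Min (g ` Q) \<in> g ` Q" using \<open>finite Q\<close> False by simp
    then obtain q0 where q0: "q0 \<in> Q" "g q0 = Min (g ` Q)" by (metis imageE)
    have "q0 \<in> C q" if "q \<in> Q" for q
    proof -
      have "q0 \<in> K" using q0(1) \<open>Q \<subseteq> K\<close> by blast
      moreover have "g q0 \<le> g q" using q0(2) that \<open>finite Q\<close> by simp
      then have "F Y q0 \<le> g q" for Y using le[OF \<open>q0 \<in> K\<close>, of Y] by linarith
      ultimately show ?thesis by (simp add: C_def)
    qed
    then show ?thesis using q0(1) \<open>Q \<subseteq> K\<close> by blast
  qed (use K(2) in simp)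
  have "K \<inter> \<Inter>(C ` K) \<noteq> {}"
  proof (rule compact_imp_fip[OF K(1)])
    fix F' assume "finite F'" "F' \<subseteq> C ` K"
    then show "K \<inter> \<Inter>F' \<noteq> {}" using fip by (metis finite_subset_image)
  qed (use closed in blast)
  then obtain p where p: "p \<in> K" "\<And>q. q \<in> K \<Longrightarrow> p \<in> C q" by blast
  have "g p \<le> g q" if "q \<in> K" for q
  proof -
    obtain Y where "F Y p = g p" using attained[OF p(1)] by blast
    moreover have "F Y p \<le> g q" using p(2)[OF that] by (simp add: C_def)
    ultimately show ?thesis by simp
  qed
  then show ?thesis using that p(1) by blast
qed

lemma compact_std_simplex: "compact (std_simplex :: (real^'n) set)"
proof -
  have "closed (std_simplex :: (real^'n) set)"
    unfolding std_simplex_def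
    by (intro closed_Collect_conj closed_Collect_all closed_Collect_eq closed_Collect_le
        continuous_intros)
  moreover have "std_simplex \<subseteq> cbox (0::real^'n) (\<chi> i. 1)"
  proof
    fix p :: "real^'n" assume p: "p \<in> std_simplex"
    then have "p $ i \<le> sum (\<lambda>i. p $ i) UNIV" for i
      by (intro member_le_sum) (auto simp: std_simplex_def)
    then show "p \<in> cbox 0 (\<chi> i. 1)" using p by (simp add: mem_box_cart std_simplex_def)
  qed
  ultimately show ?thesis
    using bounded_cbox bounded_subset compact_eq_bounded_closed by blast
qed

lemma midpoint_in_std_simplex:
  "p \<in> std_simplex \<Longrightarrow> q \<in> std_simplex \<Longrightarrow> midpoint p q \<in> std_simplex"
  by (simp add: std_simplex_def midpoint_def sum.distrib sum_divide_distrib[symmetric])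

definition simplex_barycenter :: "real^'n" where
  "simplex_barycenter = (\<chi> i. 1 / real CARD('n))"

lemma simplex_barycenter_in_std_simplex: "simplex_barycenter \<in> std_simplex"
  by (simp add: std_simplex_def simplex_barycenter_def)

locale independent_psd_family =
  fixes B :: "'i::finite \<Rightarrow> real^'n^'n"
  assumes symmetric: "\<And>i. symmetric_matrix (B i)"
    and form_nonneg: "\<And>i x. x \<bullet> (B i *v x) \<ge> 0"
    and form_pos: "\<And>x. x \<noteq> 0 \<Longrightarrow> \<exists>i. x \<bullet> (B i *v x) > 0"
    and independent: "\<And>p. (\<Sum>i\<in>UNIV. p$i *\<^sub>R B i) = 0 \<Longrightarrow> p = 0"
begin

definition W :: "real^'i \<Rightarrow> real^'n^'n" where
  "W p = (\<Sum>i\<in>UNIV. p$i *\<^sub>R B i)"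

abbreviation feasible :: "(real^'i) set" where
  "feasible \<equiv> {p. pos_def (W p)} \<inter> std_simplex"

lemma W_entry: "W p $ a $ b = (\<Sum>i\<in>UNIV. p$i * B i $ a $ b)"
  by (simp add: W_def)

lemma inner_W: "x \<bullet> (W p *v y) = (\<Sum>i\<in>UNIV. p$i * (x \<bullet> (B i *v y)))"
proof -
  have "x \<bullet> (W p *v y) = (\<Sum>a\<in>UNIV. \<Sum>b\<in>UNIV. \<Sum>i\<in>UNIV. p$i * (x$a * B i $a$b * y$b))"
    unfolding inner_matrix_vector_sum W_entry by (simp add: sum_distrib_left sum_distrib_right mult_ac)
  also have "\<dots> = (\<Sum>a\<in>UNIV. \<Sum>i\<in>UNIV. \<Sum>b\<in>UNIV. p$i * (x$a * B i $a$b * y$b))"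
    by (rule sum.cong[OF refl], rule sum.swap)
  also have "\<dots> = (\<Sum>i\<in>UNIV. \<Sum>a\<in>UNIV. \<Sum>b\<in>UNIV. p$i * (x$a * B i $a$b * y$b))"
    by (rule sum.swap)
  also have "\<dots> = (\<Sum>i\<in>UNIV. p$i * (x \<bullet> (B i *v y)))"
    unfolding inner_matrix_vector_sum by (simp add: sum_distrib_left)
  finally show ?thesis .
qed

lemma symmetric_W: "symmetric_matrix (W p)"
  using symmetric by (simp add: symmetric_matrix_def W_entry)

lemma linear_W: "linear W"
  unfolding W_def by (intro linearI) (simp_all add: scaleR_add_left sum.distrib scaleR_sum_right)

lemma W_midpoint: "W (midpoint p q) = midpoint (W p) (W q)"
  by (simp add: midpoint_def linear_add[OF linear_W] linear_scale[OF linear_W])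

lemma W_inj: "W p = W q \<Longrightarrow> p = q"
  using independent[of "p - q"] linear_diff[OF linear_W, of p q] by (simp add: W_def)

lemma pos_semidef_W: "p \<in> std_simplex \<Longrightarrow> pos_semidef (W p)"
  unfolding pos_semidef_def using symmetric_W form_nonneg
  by (auto simp: inner_W std_simplex_def intro!: sum_nonneg)

lemma pos_def_W_barycenter: "pos_def (W simplex_barycenter)"
proof -
  have "x \<bullet> (W simplex_barycenter *v x) > 0" if x: "x \<noteq> 0" for x
  proof -
    obtain i where "x \<bullet> (B i *v x) > 0" using form_pos[OF x] by blast
    then show ?thesis
      unfolding inner_W simplex_barycenter_def
      by (intro sum_pos2[of _ i]) (auto simp: form_nonneg)
  qed
  then show ?thesis using symmetric_W by (simp add: pos_def_iff)
qed

lemma feasible_midpoint: "p \<in> feasible \<Longrightarrow> q \<in> feasible \<Longrightarrow> midpoint p q \<in> feasible"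
  by (auto simp: W_midpoint intro: pos_def_midpoint midpoint_in_std_simplex)

lemma unique_minimizer_neg_ln_det: "unique_minimizer (\<lambda>p. - ln (det (W p))) feasible"
proof -
  have "continuous_on std_simplex (\<lambda>p. det (W p))"
    unfolding det_def W_entry by (intro continuous_intros)
  then obtain p where p: "p \<in> std_simplex" and max: "\<And>q. q \<in> std_simplex \<Longrightarrow> det (W q) \<le> det (W p)"
    using continuous_attains_sup[OF compact_std_simplex] simplex_barycenter_in_std_simplex by blast
  have "det (W p) > 0"
    using pos_def_det_pos[OF pos_def_W_barycenter] max[OF simplex_barycenter_in_std_simplex] by linarith
  then have "p \<in> feasible"
    using p pos_semidef_det_nonzero_imp_pos_def[OF pos_semidef_W[OF p]] by simp
  moreover have "- ln (det (W p)) \<le> - ln (det (W q))" if "q \<in> feasible" for q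
  proof -
    have "det (W q) > 0" "det (W q) \<le> det (W p)" using that max pos_def_det_pos by auto
    then show ?thesis by simp
  qed
  moreover have "midpoint p1 p2 \<in> feasible \<and>
      - ln (det (W (midpoint p1 p2))) < (- ln (det (W p1)) + - ln (det (W p2))) / 2"
    if "p1 \<in> feasible" "p2 \<in> feasible" "p1 \<noteq> p2" for p1 p2
  proof -
    have "W p1 \<noteq> W p2" using that(3) W_inj by blast
    then show ?thesis
      using that feasible_midpoint neg_ln_det_midpoint_less[of "W p1" "W p2"] by (simp add: W_midpoint)
  qed
  ultimately show ?thesis by (intro unique_minimizer_midpoint_convex) blast+
qed

text \<open>Along a null vector of \<open>W p\<close> the minorant is unbounded.\<close>
lemma pos_def_W_if_minorant_bounded:
  assumes p: "p \<in> std_simplex" and bounded: "\<And>Y. trace_inv_minorant (W p) Y \<le> c"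
  shows "pos_def (W p)"
proof -
  have "W p *v x \<noteq> 0" if x: "x \<noteq> 0" for x
  proof
    assume null: "W p *v x = 0"
    obtain i where xi: "x $ i \<noteq> 0" using x by (auto simp: vec_eq_iff)
    define s where "s = (\<bar>c\<bar> + 1) / (2 * x $ i)"
    define Y where "Y j = (if j = i then s *\<^sub>R x else 0)" for j
    have "trace_inv_minorant (W p) Y = (\<Sum>j\<in>UNIV. if j = i then 2 * (s * x $ i) else 0)"
      unfolding trace_inv_minorant_def
      by (rule sum.cong) (auto simp: Y_def null matrix_vector_mult_scaleR)
    also have "\<dots> = \<bar>c\<bar> + 1" using xi by (simp add: s_def)
    finally show False using bounded[of Y] by simp
  qed
  then have "det (W p) \<noteq> 0" by (auto simp: det_eq_0_iff_kernel)
  then show ?thesis using pos_semidef_det_nonzero_imp_pos_def pos_semidef_W[OF p] by blast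
qed

lemma trace_inv_has_minimizer:
  obtains p where "p \<in> feasible" "\<And>q. q \<in> feasible \<Longrightarrow> trace (matrix_inv (W p)) \<le> trace (matrix_inv (W q))"
proof -
  let ?g = "\<lambda>p. trace (matrix_inv (W p))"
  define K where "K = {p \<in> std_simplex. \<forall>Y. trace_inv_minorant (W p) Y \<le> ?g simplex_barycenter}"
  have K_feasible: "K \<subseteq> feasible"
    using pos_def_W_if_minorant_bounded by (auto simp: K_def)
  have cont: "continuous_on S (\<lambda>p. trace_inv_minorant (W p) Y)" for S Y
    unfolding trace_inv_minorant_def inner_W by (intro continuous_intros)
  have "K = std_simplex \<inter> (\<Inter>Y. {p. trace_inv_minorant (W p) Y \<le> ?g simplex_barycenter})"
    by (auto simp: K_def)
  then have "compact K"
    by (simp add: compact_Int_closed compact_std_simplex closed_INT closed_Collect_le cont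
        continuous_on_const)
  moreover have "simplex_barycenter \<in> K"
    using trace_inv_minorant_le pos_def_W_barycenter simplex_barycenter_in_std_simplex
    by (auto simp: K_def)
  moreover have "trace_inv_minorant (W p) Y \<le> ?g p" if "p \<in> K" for p Y
    using that K_feasible trace_inv_minorant_le by blast
  moreover have "\<exists>Y. trace_inv_minorant (W p) Y = ?g p" if "p \<in> K" for p
    using that K_feasible trace_inv_minorant_matrix_inv by blast
  ultimately obtain p where p: "p \<in> K" "\<And>q. q \<in> K \<Longrightarrow> ?g p \<le> ?g q"
    using compact_attains_inf_of_sup[of K "\<lambda>Y p. trace_inv_minorant (W p) Y" ?g] cont by blast
  have "?g p \<le> ?g q" if q: "q \<in> feasible" for q
  proof (cases "?g q \<le> ?g simplex_barycenter")
    case True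
    have "trace_inv_minorant (W q) Y \<le> ?g simplex_barycenter" for Y
      using q trace_inv_minorant_le[of "W q" Y] True by simp
    then have "q \<in> K" using q by (simp add: K_def)
    then show ?thesis by (rule p(2))
  next
    case False
    then show ?thesis using p(2)[OF \<open>simplex_barycenter \<in> K\<close>] by linarith
  qed
  then show ?thesis using that p(1) K_feasible by blast
qed

lemma unique_minimizer_trace_inv: "unique_minimizer (\<lambda>p. trace (matrix_inv (W p))) feasible"
proof -
  obtain p where "p \<in> feasible" "\<And>q. q \<in> feasible \<Longrightarrow> trace (matrix_inv (W p)) \<le> trace (matrix_inv (W q))"
    using trace_inv_has_minimizer by blast
  moreover have "midpoint p1 p2 \<in> feasible \<and>
      trace (matrix_inv (W (midpoint p1 p2))) < (trace (matrix_inv (W p1)) + trace (matrix_inv (W p2))) / 2"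
    if "p1 \<in> feasible" "p2 \<in> feasible" "p1 \<noteq> p2" for p1 p2
  proof -
    have "W p1 \<noteq> W p2" using that(3) W_inj by blast
    then show ?thesis
      using that feasible_midpoint trace_inv_midpoint_less[of "W p1" "W p2"] by (simp add: W_midpoint)
  qed
  ultimately show ?thesis by (intro unique_minimizer_midpoint_convex) blast+
qed

end

section \<open>Entries of the matrix exponential and of the Gramians\<close>

definition abs_entry_sum :: "real^'n^'n \<Rightarrow> real" where
  "abs_entry_sum A = (\<Sum>a\<in>UNIV. \<Sum>b\<in>UNIV. \<bar>A$a$b\<bar>)"

lemma mpow_entry_bound: "\<bar>mpow A k $ a $ b\<bar> \<le> (abs_entry_sum A + 1) ^ k"
proof (induction k arbitrary: a b)
  case 0
  then show ?case by (simp add: mat_def)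
next
  case (Suc k)
  have nonneg: "abs_entry_sum A \<ge> 0" by (simp add: abs_entry_sum_def sum_nonneg)
  have row: "(\<Sum>c\<in>UNIV. \<bar>A$a$c\<bar>) \<le> abs_entry_sum A"
    unfolding abs_entry_sum_def by (rule member_le_sum) (auto intro: sum_nonneg)
  have "\<bar>mpow A (Suc k) $ a $ b\<bar> = \<bar>\<Sum>c\<in>UNIV. A$a$c * mpow A k $c$b\<bar>"
    by (simp add: matrix_matrix_mult_def)
  also have "\<dots> \<le> (\<Sum>c\<in>UNIV. \<bar>A$a$c\<bar> * (abs_entry_sum A + 1) ^ k)"
    by (rule order_trans[OF sum_abs]) (auto intro!: sum_mono mult_left_mono simp: abs_mult Suc.IH)
  also have "\<dots> = (\<Sum>c\<in>UNIV. \<bar>A$a$c\<bar>) * (abs_entry_sum A + 1) ^ k"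
    by (simp add: sum_distrib_right)
  also have "\<dots> \<le> (abs_entry_sum A + 1) * (abs_entry_sum A + 1) ^ k"
    using row nonneg by (intro mult_right_mono) auto
  finally show ?case by simp
qed

definition mexp_coeff :: "real^'n^'n \<Rightarrow> 'n \<Rightarrow> 'n \<Rightarrow> nat \<Rightarrow> real" where
  "mexp_coeff A a b k = mpow A k $ a $ b / fact k"

lemma summable_mexp_coeff_series:
  fixes z :: "'a::{real_normed_field,banach}"
  shows "summable (\<lambda>k. of_real (mexp_coeff A a b k) * z ^ k)"
proof (rule summable_comparison_test)
  let ?K = "(abs_entry_sum A + 1) * norm z"
  show "summable (\<lambda>k. ?K ^ k / fact k)"
    using summable_exp[of ?K] by (simp add: divide_inverse mult.commute)
  have "norm (of_real (mexp_coeff A a b k) * z ^ k) \<le> ?K ^ k / fact k" for k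
  proof -
    have "norm (of_real (mexp_coeff A a b k) * z ^ k) = \<bar>mpow A k $ a $ b\<bar> / fact k * norm z ^ k"
      by (simp add: mexp_coeff_def norm_mult norm_power norm_divide)
    also have "\<dots> \<le> (abs_entry_sum A + 1) ^ k / fact k * norm z ^ k"
      by (intro mult_right_mono divide_right_mono mpow_entry_bound) auto
    finally show ?thesis by (simp add: power_mult_distrib)
  qed
  then show "\<exists>N. \<forall>k\<ge>N. norm (of_real (mexp_coeff A a b k) * z ^ k) \<le> ?K ^ k / fact k"
    by blast
qed

lemma mexp_entry: "mexp t A $ a $ b = (\<Sum>k. mexp_coeff A a b k * t ^ k)"
proof -
  have "(\<lambda>k. mexp_coeff A a b k * t ^ k) sums (\<Sum>k. mexp_coeff A a b k * t ^ k)" for a b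
    using summable_mexp_coeff_series[of A a b t] by (simp add: summable_sums)
  then have "(\<lambda>n. \<Sum>k<n. t ^ k * mpow A k $ a $ b / fact k) \<longlonglongrightarrow> (\<Sum>k. mexp_coeff A a b k * t ^ k)"
    for a b by (simp add: sums_def mexp_coeff_def algebra_simps)
  then have "(\<lambda>k. ((t ^ k) / fact k) *\<^sub>R mpow A k) sums (\<chi> a b. \<Sum>k. mexp_coeff A a b k * t ^ k)"
    unfolding sums_def by (intro vec_tendstoI) simp
  then show ?thesis by (simp add: mexp_def sums_iff)
qed

lemma mpow_transpose: "mpow (transpose A) k = transpose (mpow A k)"
proof -
  have "A ** mpow A k = mpow A k ** A" for k
    by (induction k) (simp_all add: matrix_mul_assoc)
  then show ?thesis by (induction k) (simp_all add: matrix_transpose_mul)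
qed

lemma mexp_transpose_entry: "mexp t (transpose A) $ a $ b = mexp t A $ b $ a"
  unfolding mexp_entry mexp_coeff_def mpow_transpose by (simp add: transpose_def)

definition mexp_entry_complex :: "real^'n^'n \<Rightarrow> 'n \<Rightarrow> 'n \<Rightarrow> complex \<Rightarrow> complex" where
  "mexp_entry_complex A a b z = (\<Sum>k. of_real (mexp_coeff A a b k) * z ^ k)"

lemma holomorphic_mexp_entry_complex: "mexp_entry_complex A a b holomorphic_on S"
proof -
  have "\<exists>D. (mexp_entry_complex A a b has_field_derivative D) (at z)" for z
    unfolding mexp_entry_complex_def
    using termdiffs_strong_converges_everywhere[OF summable_mexp_coeff_series] by blast
  then show ?thesis
    unfolding holomorphic_on_def field_differentiable_def by (meson has_field_derivative_at_within)
qed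

lemma mexp_entry_complex_of_real: "mexp_entry_complex A a b (of_real t) = of_real (mexp t A $ a $ b)"
proof -
  have "(\<lambda>k. mexp_coeff A a b k * t ^ k) sums (mexp t A $ a $ b)"
    using summable_mexp_coeff_series[of A a b t] by (simp add: mexp_entry summable_sums)
  then have "(\<lambda>k. of_real (mexp_coeff A a b k * t ^ k) :: complex) sums of_real (mexp t A $ a $ b)"
    by (simp only: sums_of_real_iff)
  then have "(\<lambda>k. of_real (mexp_coeff A a b k) * (of_real t) ^ k :: complex) sums of_real (mexp t A $ a $ b)"
    by simp
  then show ?thesis unfolding mexp_entry_complex_def by (simp add: sums_iff)
qed

lemma mexp_entry_complex_0: "mexp_entry_complex A a b 0 = (if a = b then 1 else 0)"
proof -
  have "mexp_entry_complex A a b 0 = of_real (mexp_coeff A a b 0)"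
    unfolding mexp_entry_complex_def by (simp add: powser_zero)
  then show ?thesis by (simp add: mexp_coeff_def mat_def)
qed

lemma mexp_0_entry: "mexp 0 A $ a $ b = (if a = b then 1 else 0)"
  using mexp_entry_complex_of_real[of A a b 0] mexp_entry_complex_0[of A a b]
  by (cases "a = b") simp_all

lemma continuous_on_mexp_entry: "continuous_on S (\<lambda>t. mexp t A $ a $ b)"
proof -
  have "continuous_on S (\<lambda>t. Re (mexp_entry_complex A a b (of_real t)))"
    by (intro continuous_intros continuous_on_compose2[OF
          holomorphic_on_imp_continuous_on[OF holomorphic_mexp_entry_complex[of A a b UNIV]]]) auto
  then show ?thesis by (simp add: mexp_entry_complex_of_real)
qed

definition gramian_integrand :: "real^'n^'n \<Rightarrow> 'n \<Rightarrow> real \<Rightarrow> real^'n^'n" where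
  "gramian_integrand A j t = mexp t A ** outer (ebasis j) (ebasis j) ** mexp t (transpose A)"

lemma gramian_integrand_eq: "gramian_integrand A j t = (\<chi> a b. mexp t A $ a $ j * mexp t A $ b $ j)"
proof -
  have outer: "outer (ebasis j) (ebasis j) $ c $ d = (if c = j \<and> d = j then 1 else 0)" for c d
    by (simp add: outer_def ebasis_def axis_def)
  let ?E = "mexp t A"
  have "(\<Sum>c\<in>UNIV. ?E$a$c * outer (ebasis j) (ebasis j) $ c $ d)
        = (\<Sum>c\<in>UNIV. if c = j then (if d = j then ?E$a$j else 0) else 0)" for a d
    by (rule sum.cong) (auto simp: outer)
  then have left: "(?E ** outer (ebasis j) (ebasis j)) $ a $ d = (if d = j then ?E $ a $ j else 0)" for a d
    by (simp add: matrix_matrix_mult_def)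
  have "(\<Sum>d\<in>UNIV. (?E ** outer (ebasis j) (ebasis j)) $ a $ d * mexp t (transpose A) $ d $ b)
        = (\<Sum>d\<in>UNIV. if d = j then ?E $ a $ j * ?E $ b $ j else 0)" for a b
    by (rule sum.cong) (auto simp: left mexp_transpose_entry)
  then show ?thesis
    by (simp add: gramian_integrand_def matrix_matrix_mult_def vec_eq_iff)
qed

lemma gramian_integrand_integrable: "gramian_integrand A j integrable_on {0..T}"
  unfolding gramian_integrand_eq
  by (intro integrable_continuous_interval continuous_intros continuous_on_mexp_entry)

lemma Wi_eq_integral: "Wi A j T = integral {0..T} (gramian_integrand A j)"
  by (simp add: Wi_def gramian_integrand_def[abs_def])

lemma Wi_entry:
  fixes A :: "real^'n^'n"
  shows "Wi A j T $ a $ b = integral {0..T} (\<lambda>t. mexp t A $ a $ j * mexp t A $ b $ j)"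
proof -
  have "bounded_linear (\<lambda>M::real^'n^'n. M $ a $ b)"
    using bounded_linear_compose[OF bounded_linear_vec_nth bounded_linear_vec_nth] by blast
  then have "integral {0..T} ((\<lambda>M. M $ a $ b) \<circ> gramian_integrand A j)
             = integral {0..T} (gramian_integrand A j) $ a $ b"
    by (rule integral_linear[OF gramian_integrand_integrable])
  then show ?thesis by (simp add: Wi_eq_integral o_def gramian_integrand_eq)
qed

lemma Wi_quadratic_form:
  fixes A :: "real^'n^'n"
  shows "x \<bullet> (Wi A j T *v x) = integral {0..T} (\<lambda>t. (\<Sum>a\<in>UNIV. x $ a * mexp t A $ a $ j)\<^sup>2)"
proof -
  have "linear (\<lambda>M::real^'n^'n. x \<bullet> (M *v x))"
    by (intro linearI) (simp_all add: inner_matrix_add inner_matrix_scaleR)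
  then have "bounded_linear (\<lambda>M::real^'n^'n. x \<bullet> (M *v x))"
    using linear_conv_bounded_linear by blast
  then have "integral {0..T} ((\<lambda>M. x \<bullet> (M *v x)) \<circ> gramian_integrand A j)
             = x \<bullet> (integral {0..T} (gramian_integrand A j) *v x)"
    by (rule integral_linear[OF gramian_integrand_integrable])
  moreover have "x \<bullet> (gramian_integrand A j t *v x) = (\<Sum>a\<in>UNIV. x $ a * mexp t A $ a $ j)\<^sup>2" for t
    unfolding inner_matrix_vector_sum gramian_integrand_eq power2_eq_square sum_product
    by (simp add: mult_ac)
  ultimately show ?thesis by (simp add: Wi_eq_integral o_def)
qed

lemma symmetric_matrix_Wi: "symmetric_matrix (Wi A j T)"
  unfolding symmetric_matrix_def Wi_entry by (simp add: mult.commute)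

lemma continuous_on_Wi_form_integrand:
  "continuous_on S (\<lambda>t. (\<Sum>a\<in>UNIV. x $ a * mexp t A $ a $ j)\<^sup>2)"
  by (intro continuous_intros continuous_on_mexp_entry)

lemma Wi_form_nonneg: "x \<bullet> (Wi A j T *v x) \<ge> 0"
  unfolding Wi_quadratic_form
  by (rule integral_nonneg) (auto intro: integrable_continuous_interval continuous_on_Wi_form_integrand)

text \<open>At \<open>t = 0\<close> the integrand for \<open>W\<^sub>j\<close> equals \<open>x\<^sub>j\<^sup>2\<close>, so it cannot vanish identically on \<open>[0, T]\<close>.\<close>
lemma Wi_form_pos:
  fixes A :: "real^'n^'n"
  assumes T: "T > 0" and x: "x \<noteq> 0"
  obtains j where "x \<bullet> (Wi A j T *v x) > 0"
proof -
  obtain j where xj: "x $ j \<noteq> 0" using x by (auto simp: vec_eq_iff)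
  let ?f = "\<lambda>t. (\<Sum>a\<in>UNIV. x $ a * mexp t A $ a $ j)\<^sup>2"
  have "(\<Sum>a\<in>UNIV. x $ a * mexp 0 A $ a $ j) = x $ j"
    by (simp add: mexp_0_entry if_distrib cong: if_cong)
  then have f0: "?f 0 \<noteq> 0" using xj by simp
  have "x \<bullet> (Wi A j T *v x) > 0"
  proof (rule ccontr)
    assume "\<not> x \<bullet> (Wi A j T *v x) > 0"
    then have "integral {0..T} ?f = 0"
      using Wi_form_nonneg[of x A j T] unfolding Wi_quadratic_form by linarith
    moreover have "?f integrable_on {0..T}"
      by (intro integrable_continuous_interval continuous_on_Wi_form_integrand)
    ultimately have "(?f has_integral 0) (cbox 0 T)"
      using integrable_integral[of ?f "{0..T}"] by (simp add: cbox_interval)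
    then have "?f 0 = 0"
      using T by (intro has_integral_0_cbox_imp_0[OF continuous_on_Wi_form_integrand]) auto
    with f0 show False by simp
  qed
  then show ?thesis using that by blast
qed

section \<open>Nonsingularity for almost every horizon\<close>

lemma tendsto_det:
  fixes f :: "'n::finite \<Rightarrow> 'n \<Rightarrow> 'b \<Rightarrow> 'a::real_normed_field"
  assumes "\<And>i j. (f i j \<longlongrightarrow> L i j) F"
  shows "((\<lambda>x. det (\<chi> i j. f i j x)) \<longlongrightarrow> det (\<chi> i j. L i j)) F"
  unfolding det_def by simp (intro tendsto_intros assms)

lemma holomorphic_on_det:
  fixes f :: "'n::finite \<Rightarrow> 'n \<Rightarrow> complex \<Rightarrow> complex"
  assumes "\<And>i j. f i j holomorphic_on S"
  shows "(\<lambda>z. det (\<chi> i j. f i j z)) holomorphic_on S"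
  unfolding det_def by simp (intro holomorphic_intros assms)

lemma det_scale_rows:
  fixes M :: "'a::comm_ring_1^'n^'n"
  shows "det (\<chi> i j. c * M$i$j) = c ^ CARD('n) * det M"
  unfolding det_def by (simp add: prod.distrib sum_distrib_left mult_ac)

text \<open>Near \<open>0\<close> the matrix \<open>G(z)\<close> is \<open>z (I + o(1))\<close>.\<close>
lemma det_nonzero_if_derivative_at_0_id:
  fixes G :: "'n::finite \<Rightarrow> 'n \<Rightarrow> complex \<Rightarrow> complex"
  assumes G0: "\<And>i j. G i j 0 = 0"
    and G': "\<And>i j. (G i j has_field_derivative (if i = j then 1 else 0)) (at 0)"
  obtains z where "det (\<chi> i j. G i j z) \<noteq> 0"
proof -
  have "((\<lambda>z. G i j z / z) \<longlongrightarrow> (if i = j then 1 else 0)) (at 0)" for i j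
    using G'[of i j] G0 by (simp add: has_field_derivative_iff)
  then have "((\<lambda>z. det (\<chi> i j. G i j z / z)) \<longlongrightarrow> det (mat 1 :: complex^'n^'n)) (at 0)"
    using tendsto_det[of "\<lambda>i j z. G i j z / z"] by (simp add: mat_def)
  then have "eventually (\<lambda>z. det (\<chi> i j. G i j z / z) \<noteq> 0) (at 0)"
    using tendsto_imp_eventually_ne by fastforce
  then obtain d where d: "d > 0"
    and near: "\<And>z. z \<noteq> 0 \<Longrightarrow> dist z 0 < d \<Longrightarrow> det (\<chi> i j. G i j z / z) \<noteq> 0"
    unfolding eventually_at by auto
  define z :: complex where "z = of_real (d / 2)"
  have z: "z \<noteq> 0" "dist z 0 < d" using d by (simp_all add: z_def)
  have "det (\<chi> i j. G i j z) = det (\<chi> i j. z * (\<chi> i j. G i j z / z) $ i $ j)"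
    using z by (intro arg_cong[of _ _ det]) (simp add: vec_eq_iff)
  also have "\<dots> = z ^ CARD('n) * det (\<chi> i j. G i j z / z)"
    by (rule det_scale_rows)
  finally show ?thesis using that[of z] z near[of z] by simp
qed

lemma entire_primitive:
  fixes f :: "complex \<Rightarrow> complex"
  assumes "f holomorphic_on UNIV"
  obtains G where "\<And>z. (G has_field_derivative f z) (at z)" "G 0 = 0"
proof -
  obtain g where g: "\<And>z. (g has_field_derivative f z) (at z)"
    using holomorphic_convex_primitive'[OF convex_UNIV open_UNIV assms] by auto
  show ?thesis
  proof
    show "((\<lambda>z. g z - g 0) has_field_derivative f z) (at z)" for z
      using DERIV_diff[OF g DERIV_const] by simp
  qed simp
qed

lemma primitive_of_real_eq_integral:
  fixes G g :: "complex \<Rightarrow> complex" and e :: "real \<Rightarrow> real"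
  assumes G: "\<And>z. (G has_field_derivative g z) (at z)" and G0: "G 0 = 0"
    and real: "\<And>t. g (of_real t) = of_real (e t)" and T: "T \<ge> 0"
  shows "G (of_real T) = of_real (integral {0..T} e)"
proof -
  have "((\<lambda>t. G (of_real t)) has_vector_derivative of_real (e t)) (at t within {0..T})" for t
    using has_vector_derivative_real_field[OF G[of "of_real t"]] by (simp add: real)
  then have "((\<lambda>t. complex_of_real (e t)) has_integral (G (of_real T) - G (of_real 0))) {0..T}"
    by (intro fundamental_theorem_of_calculus T)
  then have integral: "((\<lambda>t. complex_of_real (e t)) has_integral G (of_real T)) {0..T}"
    using G0 by simp
  have "((Re \<circ> (\<lambda>t. complex_of_real (e t))) has_integral Re (G (of_real T))) {0..T}"
    by (rule has_integral_linear[OF integral bounded_linear_Re])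
  then have re: "(e has_integral Re (G (of_real T))) {0..T}" by (simp add: o_def)
  have "((Im \<circ> (\<lambda>t. complex_of_real (e t))) has_integral Im (G (of_real T))) {0..T}"
    by (rule has_integral_linear[OF integral bounded_linear_Im])
  then have "((\<lambda>t. 0::real) has_integral Im (G (of_real T))) {0..T}" by (simp add: o_def)
  then have "Im (G (of_real T)) = 0" using has_integral_0 has_integral_unique by blast
  moreover have "integral {0..T} e = Re (G (of_real T))" using re by (rule integral_unique)
  ultimately show ?thesis by (simp add: complex_eq_iff)
qed

text \<open>The \<open>(i, j)\<close> entry is \<open>\<integral>\<^sub>0\<^sup>T ((e\<^sup>A\<^sup>t)\<^sub>i\<^sub>j)\<^sup>2 dt\<close>.\<close>
definition gramian_diagonals :: "real^'n^'n \<Rightarrow> real \<Rightarrow> real^'n^'n" where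
  "gramian_diagonals A T = (\<chi> i j. Wi A j T $ i $ i)"

lemma Wi_independent_if_gramian_diagonals_nonsingular:
  assumes "det (gramian_diagonals A T) \<noteq> 0" and "(\<Sum>j\<in>UNIV. p$j *\<^sub>R Wi A j T) = 0"
  shows "p = 0"
proof -
  have "(\<Sum>j\<in>UNIV. p$j * Wi A j T $ i $ i) = 0" for i
    using arg_cong[OF assms(2), of "\<lambda>M. M $ i $ i"] by simp
  then have "gramian_diagonals A T *v p = 0"
    by (simp add: gramian_diagonals_def matrix_vector_mult_def vec_eq_iff mult.commute)
  then show ?thesis using assms(1) by (auto simp: det_eq_0_iff_kernel)
qed

lemma Wi_diagonal_primitives:
  fixes A :: "real^'n^'n"
  obtains G where "\<And>i j z. (G i j has_field_derivative (mexp_entry_complex A i j z)\<^sup>2) (at z)"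
    "\<And>i j. G i j 0 = 0" "\<And>i j T. T \<ge> 0 \<Longrightarrow> G i j (of_real T) = of_real (Wi A j T $ i $ i)"
proof -
  let ?P = "\<lambda>i j G. (\<forall>z. (G has_field_derivative (mexp_entry_complex A i j z)\<^sup>2) (at z)) \<and> G 0 = 0"
  have ex: "\<exists>G. ?P i j G" for i j
  proof -
    have "(\<lambda>z. (mexp_entry_complex A i j z)\<^sup>2) holomorphic_on UNIV"
      by (intro holomorphic_intros holomorphic_mexp_entry_complex)
    then show ?thesis using entire_primitive by blast
  qed
  define G where "G i j = (SOME G. ?P i j G)" for i j
  have "?P i j (G i j)" for i j
    unfolding G_def by (rule someI_ex[of "?P i j", OF ex])
  then have G: "\<And>i j z. (G i j has_field_derivative (mexp_entry_complex A i j z)\<^sup>2) (at z)"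
    and G0: "\<And>i j. G i j 0 = 0"
    by auto
  have "G i j (of_real T) = of_real (integral {0..T} (\<lambda>t. (mexp t A $ i $ j)\<^sup>2))" if "T \<ge> 0" for i j T
    using that by (intro primitive_of_real_eq_integral[OF G G0]) (simp_all add: mexp_entry_complex_of_real)
  then have "G i j (of_real T) = of_real (Wi A j T $ i $ i)" if "T \<ge> 0" for i j T
    using that by (simp add: Wi_entry power2_eq_square)
  with G G0 show ?thesis using that by blast
qed

text \<open>The determinant extends to an entire function of the horizon that is not identically zero,
  so its zeros are countable.\<close>
lemma countable_gramian_diagonals_singular:
  fixes A :: "real^'n^'n"
  shows "countable {T. T \<ge> 0 \<and> det (gramian_diagonals A T) = 0}"
proof -
  obtain G where G: "\<And>i j z. (G i j has_field_derivative (mexp_entry_complex A i j z)\<^sup>2) (at z)"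
    and G0: "\<And>i j. G i j 0 = 0" and G_real: "\<And>i j T. T \<ge> 0 \<Longrightarrow> G i j (of_real T) = of_real (Wi A j T $ i $ i)"
    using Wi_diagonal_primitives by blast
  define H where "H z = det (\<chi> i j. G i j z)" for z
  have "G i j holomorphic_on UNIV" for i j
    using G unfolding holomorphic_on_def field_differentiable_def
    by (meson has_field_derivative_at_within)
  then have holomorphic: "H holomorphic_on UNIV" unfolding H_def[abs_def] by (rule holomorphic_on_det)
  have "\<not> H constant_on UNIV"
  proof -
    have "(G i j has_field_derivative (if i = j then 1 else 0)) (at 0)" for i j
      using G[of i j 0] by (cases "i = j") (simp_all add: mexp_entry_complex_0)
    then obtain z where "H z \<noteq> 0"
      using det_nonzero_if_derivative_at_0_id[of G] G0 unfolding H_def by blast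
    moreover have "(\<chi> i j. G i j 0) = (mat 0 :: complex^'n^'n)"
      by (simp add: G0 mat_def vec_eq_iff)
    then have "H 0 = 0" by (simp add: H_def del: mat_0)
    ultimately show ?thesis unfolding constant_on_def by (metis UNIV_I)
  qed
  then have "countable {z \<in> UNIV. H z = 0}"
    by (rule holomorphic_countable_zeros[OF holomorphic open_UNIV connected_UNIV fsigma_UNIV])
  then have "countable (Re ` {z \<in> UNIV. H z = 0})" by (rule countable_image)
  moreover have "{T. T \<ge> 0 \<and> det (gramian_diagonals A T) = 0} \<subseteq> Re ` {z \<in> UNIV. H z = 0}"
  proof
    fix T assume T: "T \<in> {T. T \<ge> 0 \<and> det (gramian_diagonals A T) = 0}"
    then have "(\<chi> i j. G i j (of_real T)) = of_real_matrix (gramian_diagonals A T)"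
      by (simp add: G_real gramian_diagonals_def of_real_matrix_def vec_eq_iff)
    then have "H (of_real T) = of_real (det (gramian_diagonals A T))"
      by (simp add: H_def det_of_real_matrix)
    then show "T \<in> Re ` {z \<in> UNIV. H z = 0}"
      using T by (intro image_eqI[of _ _ "of_real T"]) auto
  qed
  ultimately show ?thesis by (rule countable_subset[rotated])
qed

lemma unique_scorings_if_gramian_diagonals_nonsingular:
  fixes A :: "real^'n^'n"
  assumes T: "T > 0" and nonsingular: "det (gramian_diagonals A T) \<noteq> 0"
  shows "unique_minimizer (fT A T) (XT A T \<inter> std_simplex) \<and>
         unique_minimizer (gT A T) (XT A T \<inter> std_simplex)"
proof -
  interpret independent_psd_family "\<lambda>j. Wi A j T"
  proof
    show "symmetric_matrix (Wi A j T)" for j by (rule symmetric_matrix_Wi)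
    show "x \<bullet> (Wi A j T *v x) \<ge> 0" for j x by (rule Wi_form_nonneg)
    show "\<exists>j. x \<bullet> (Wi A j T *v x) > 0" if "x \<noteq> 0" for x
      using Wi_form_pos[OF T that] by blast
    show "p = 0" if "(\<Sum>j\<in>UNIV. p$j *\<^sub>R Wi A j T) = 0" for p
      using Wi_independent_if_gramian_diagonals_nonsingular[OF nonsingular that] .
  qed
  have "W = (\<lambda>p. Wp A p T)" by (simp add: fun_eq_iff W_def Wp_def)
  then show ?thesis
    using unique_minimizer_neg_ln_det unique_minimizer_trace_inv
    by (simp add: fT_def[abs_def] gT_def[abs_def] XT_def)
qed

theorem theorem1:
  fixes A :: "real^'n^'n"
  shows "AE T in lborel. T > 0 \<longrightarrow>
           unique_minimizer (fT A T) (XT A T \<inter> std_simplex) \<and>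
           unique_minimizer (gT A T) (XT A T \<inter> std_simplex)"
proof (rule AE_I')
  show "{T. T \<ge> 0 \<and> det (gramian_diagonals A T) = 0} \<in> null_sets lborel"
    by (rule countable_imp_null_set_lborel[OF countable_gramian_diagonals_singular])
  show "{T \<in> space lborel. \<not> (T > 0 \<longrightarrow>
          unique_minimizer (fT A T) (XT A T \<inter> std_simplex) \<and>
          unique_minimizer (gT A T) (XT A T \<inter> std_simplex))}
        \<subseteq> {T. T \<ge> 0 \<and> det (gramian_diagonals A T) = 0}"
  proof
    fix T assume "T \<in> {T \<in> space lborel. \<not> (T > 0 \<longrightarrow>
          unique_minimizer (fT A T) (XT A T \<inter> std_simplex) \<and>
          unique_minimizer (gT A T) (XT A T \<inter> std_simplex))}"
    then show "T \<in> {T. T \<ge> 0 \<and> det (gramian_diagonals A T) = 0}"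
      using unique_scorings_if_gramian_diagonals_nonsingular[of T A] by auto
  qed
qed

end
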